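(* Let $X$ be a nonempty compact metric space, $Y$ a compact metric space with metric $d_Y$ and $\mathcal Y$ an $(X)$-regularizing family for $Y$. Order $\mathcal Y$ as a sequence $(Y_n)_{n\ge1}$. Let $(Z_n)_{n\ge0}$ be a sequence of distinct members of $\mathcal Y$ such that: (0) $Z_0$ is arbitrary; (1) $Z_1\ne Y_1$, $\mathrm{diam}(Z_1)<\tfrac12\mathrm{diam}(Z_0)$ and $Z_1\subset N_{\mathrm{diam}(Z_0)}(Z_0)$; (2) for each $n\ge1$, $Z_{n+1}\ne Y_{n+1}$, $\mathrm{diam}(Z_{n+1})<\tfrac12\mathrm{diam}(Z_n)$ and $Z_{n+1}\subset N_{d_n}(Z_n)$, where $$d_n=\min\Big(\mathrm{diam}(Z_n),\tfrac13 d_Y(Y_n,Z_n),\tfrac1{3^2}d_Y(Y_{n-1},Z_{n-1}),\dots,\tfrac1{3^n}d_Y(Y_1,Z_1)\Big).$$ Then $(Z_n)$ converges, and its limit point $p=\lim_nZ_n$ belongs to $Y\setminus\bigcup\mathcal Y$.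
   Context: An $(X)$-regularizing family for $Y$ is a countably infinite family $\mathcal Y$ of subsets of $Y$ such that: (a1) the members are pairwise disjoint subspaces homeomorphic to $X$; (a2) $\mathcal Y$ is null (for every $\varepsilon>0$ only finitely many members have diameter $\ge\varepsilon$); (a3) each member has dense complement in $Y$; (a4) $\bigcup\mathcal Y$ is dense in $Y$; (a5) any two points not in a common member of $\mathcal Y$ are separated by an open, closed, $\mathcal Y$-saturated subset of $Y$. Notation: $N_\varepsilon(A)=\{x\in Y:d_Y(x,A)<\varepsilon\}$; $d_Y(A,B)=\inf\{d_Y(a,b):a\in A,b\in B\}$. A sequence of pairwise distinct members $Z_n$ of $\mathcal Y$ converges to $p$ if $p_n\to p$ for any choice $p_n\in Z_n$. *)

theory Defs
  imports "HOL-Analysis.Analysis"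
begin

definition nbhd :: "'a::metric_space set \<Rightarrow> real \<Rightarrow> 'a set \<Rightarrow> 'a set" where
  "nbhd Y \<epsilon> A = {x \<in> Y. infdist x A < \<epsilon>}"

definition saturated :: "'a set set \<Rightarrow> 'a set \<Rightarrow> bool" where
  "saturated F U \<longleftrightarrow> (\<forall>A\<in>F. A \<inter> U \<noteq> {} \<longrightarrow> A \<subseteq> U)"

definition regularizing_family ::
  "'b::metric_space set \<Rightarrow> 'a::metric_space set \<Rightarrow> 'a set set \<Rightarrow> bool" where
  "regularizing_family X Y F \<longleftrightarrow>
     countable F \<and> infinite F \<and> (\<forall>A\<in>F. A \<subseteq> Y) \<and>
     \<comment> \<open>(a1)\<close>
     pairwise disjnt F \<and> (\<forall>A\<in>F. A homeomorphic X) \<and>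
     \<comment> \<open>(a2)\<close>
     (\<forall>\<epsilon>>0. finite {A\<in>F. diameter A \<ge> \<epsilon>}) \<and>
     \<comment> \<open>(a3)\<close>
     (\<forall>A\<in>F. Y \<subseteq> closure (Y - A)) \<and>
     \<comment> \<open>(a4)\<close>
     Y \<subseteq> closure (\<Union>F) \<and>
     \<comment> \<open>(a5)\<close>
     (\<forall>x\<in>Y. \<forall>y\<in>Y. x \<noteq> y \<and> \<not> (\<exists>A\<in>F. x \<in> A \<and> y \<in> A) \<longrightarrow>
        (\<exists>U. openin (top_of_set Y) U \<and> closedin (top_of_set Y) U \<and>
             saturated F U \<and> x \<in> U \<and> y \<notin> U))"

definition sets_converge_to :: "(nat \<Rightarrow> 'a::metric_space set) \<Rightarrow> 'a \<Rightarrow> bool" where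
  "sets_converge_to Z p \<longleftrightarrow> (\<forall>q. (\<forall>n. q n \<in> Z n) \<longrightarrow> q \<longlonglongrightarrow> p)"

definition dseq :: "(nat \<Rightarrow> 'a::metric_space set) \<Rightarrow> (nat \<Rightarrow> 'a set) \<Rightarrow> nat \<Rightarrow> real" where
  "dseq Ys Z n = min (diameter (Z n))
      (Min ((\<lambda>k. setdist (Ys k) (Z k) / 3 ^ (n + 1 - k)) ` {1..n}))"

end

theory Submission
  imports Defs
begin

text \<open>
  Each Z_(n+1) lies within diam Z_n of Z_n and the diameters at least halve at every step, so points
  chosen in consecutive members move by summable amounts and the members converge to a point p of
  the complete space Y. If p lay in some Y_m, then Y_m and Z_m, being distinct members, are disjoint
  compacta at some distance \<delta> > 0. The choice of d_n keeps Z_(m+k+1) within \<delta>/3^(k+1) of Z_(m+k),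
  so the whole tail, and with it p, stays within \<delta>/3 + \<delta>/9 + \<dots> = \<delta>/2 of Z_m, although
  d(p, Z_m) \<ge> \<delta>.
\<close>

lemma infdist_lessE:
  fixes A :: "'a::metric_space set"
  assumes "A \<noteq> {}" "infdist x A < e"
  obtains y where "y \<in> A" "dist x y < e"
proof -
  have "bdd_below ((\<lambda>a. dist x a) ` A)" by (rule bdd_belowI[of _ 0]) auto
  then show ?thesis using assms that infdist_notempty[OF assms(1), of x]
    by (auto simp: cINF_less_iff)
qed

lemma dist_le_sum_dist_Suc:
  fixes f :: "nat \<Rightarrow> 'a::metric_space"
  assumes "m \<le> n"
  shows "dist (f m) (f n) \<le> (\<Sum>k=m..<n. dist (f k) (f (Suc k)))"
  using assms
proof (induction n rule: dec_induct)
  case (step n)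
  have "dist (f m) (f (Suc n)) \<le> dist (f m) (f n) + dist (f n) (f (Suc n))"
    by (rule dist_triangle)
  also have "\<dots> \<le> (\<Sum>k=m..<Suc n. dist (f k) (f (Suc k)))"
    using step by simp
  finally show ?case .
qed simp

lemma Cauchy_if_summable_dist_Suc_bound:
  fixes f :: "nat \<Rightarrow> 'a::metric_space"
  assumes "summable b" and b: "\<And>n. dist (f n) (f (Suc n)) \<le> b n"
  shows "Cauchy f"
proof (rule metric_CauchyI)
  fix e :: real assume "0 < e"
  then obtain N where N: "\<And>m n. m \<ge> N \<Longrightarrow> norm (sum b {m..<n}) < e"
    using \<open>summable b\<close> unfolding summable_Cauchy by blast
  have "dist (f m) (f n) < e" if "m \<ge> N" "m \<le> n" for m n
  proof -
    have "dist (f m) (f n) \<le> (\<Sum>k=m..<n. dist (f k) (f (Suc k)))"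
      using \<open>m \<le> n\<close> by (rule dist_le_sum_dist_Suc)
    also have "\<dots> \<le> sum b {m..<n}"
      using b by (rule sum_mono)
    also have "\<dots> \<le> norm (sum b {m..<n})" by simp
    also have "\<dots> < e" using N \<open>m \<ge> N\<close> .
    finally show ?thesis .
  qed
  then show "\<exists>M. \<forall>m\<ge>M. \<forall>n\<ge>M. dist (f m) (f n) < e"
    by (metis dist_commute nle_le)
qed

lemma sets_converge_to_if_shrinking:
  fixes Z :: "nat \<Rightarrow> 'a::metric_space set"
  assumes "complete S" and ne: "\<And>n. Z n \<noteq> {}" and sub: "\<And>n. Z n \<subseteq> S"
    and bdd: "\<And>n. bounded (Z n)"
    and near: "\<And>n x. x \<in> Z (Suc n) \<Longrightarrow> infdist x (Z n) < diameter (Z n)"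
    and diam: "summable (\<lambda>n. diameter (Z n))"
  obtains p where "p \<in> S" "sets_converge_to Z p"
proof -
  define q0 where "q0 n = (SOME x. x \<in> Z n)" for n
  have q0: "q0 n \<in> Z n" for n unfolding q0_def using ne by (simp add: some_in_eq)
  have "dist (q0 n) (q0 (Suc n)) \<le> 2 * diameter (Z n)" for n
  proof -
    obtain y where y: "y \<in> Z n" "dist (q0 (Suc n)) y < diameter (Z n)"
      using infdist_lessE[OF ne[of n] near[OF q0[of "Suc n"]]] by blast
    have "dist (q0 n) y \<le> diameter (Z n)" by (rule diameter_bounded_bound[OF bdd q0 y(1)])
    with y(2) show ?thesis
      using dist_triangle[of "q0 n" "q0 (Suc n)" y] dist_commute[of "q0 (Suc n)" y] by linarith
  qed
  moreover have "summable (\<lambda>n. 2 * diameter (Z n))"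
    using diam by (rule summable_mult)
  ultimately have "Cauchy q0"
    by (intro Cauchy_if_summable_dist_Suc_bound[of "\<lambda>n. 2 * diameter (Z n)"])
  then obtain p where "p \<in> S" "q0 \<longlonglongrightarrow> p"
    using \<open>complete S\<close> q0 sub unfolding complete_def by blast
  have "q \<longlonglongrightarrow> p" if q: "\<And>n. q n \<in> Z n" for q
  proof -
    have "(\<lambda>n. dist (q n) p) \<longlonglongrightarrow> 0"
    proof (rule Lim_null_comparison)
      have "norm (dist (q n) p) \<le> diameter (Z n) + dist (q0 n) p" for n
        using diameter_bounded_bound[OF bdd q q0, of n] dist_triangle[of "q n" p "q0 n"] by simp
      then show "\<forall>\<^sub>F n in sequentially. norm (dist (q n) p) \<le> diameter (Z n) + dist (q0 n) p"
        by (simp add: always_eventually)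
      show "(\<lambda>n. diameter (Z n) + dist (q0 n) p) \<longlonglongrightarrow> 0"
        using tendsto_add[OF summable_LIMSEQ_zero[OF diam] tendsto_dist_iff[THEN iffD1, OF \<open>q0 \<longlonglongrightarrow> p\<close>]]
        by (simp only: add_0_right)
    qed
    then show ?thesis by (rule tendsto_dist_iff[THEN iffD2])
  qed
  with \<open>p \<in> S\<close> show thesis by (intro that) (auto simp: sets_converge_to_def)
qed

lemma infdist_le_sum_of_chain:
  fixes Z :: "nat \<Rightarrow> 'a::metric_space set"
  assumes ne: "\<And>k. Z k \<noteq> {}"
    and near: "\<And>k x. x \<in> Z (Suc (m + k)) \<Longrightarrow> infdist x (Z (m + k)) < e k"
  shows "x \<in> Z (m + n) \<Longrightarrow> infdist x (Z m) \<le> (\<Sum>k<n. e k)"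
proof (induction n arbitrary: x)
  case (Suc n)
  obtain y where y: "y \<in> Z (m + n)" "dist x y < e n"
    using infdist_lessE[OF ne near] Suc.prems by auto
  have "infdist x (Z m) \<le> infdist y (Z m) + dist x y"
    using infdist_triangle[of x "Z m" y] by (simp add: dist_commute)
  also have "\<dots> \<le> (\<Sum>k<Suc n. e k)"
    using Suc.IH[OF y(1)] y(2) by simp
  finally show ?case .
qed simp

lemma infdist_limit_le_suminf:
  fixes Z :: "nat \<Rightarrow> 'a::metric_space set"
  assumes "sets_converge_to Z p" and ne: "\<And>k. Z k \<noteq> {}"
    and near: "\<And>k x. x \<in> Z (Suc (m + k)) \<Longrightarrow> infdist x (Z (m + k)) < e k"
    and "summable e"
  shows "infdist p (Z m) \<le> suminf e"
proof -
  have e_nonneg: "0 \<le> e k" for k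
  proof -
    obtain x where "x \<in> Z (Suc (m + k))" using ne by blast
    from near[OF this] show ?thesis using infdist_nonneg[of x "Z (m + k)"] by linarith
  qed
  define q where "q n = (SOME x. x \<in> Z n)" for n
  have q: "q n \<in> Z n" for n unfolding q_def using ne by (simp add: some_in_eq)
  then have "q \<longlonglongrightarrow> p"
    using \<open>sets_converge_to Z p\<close> unfolding sets_converge_to_def by blast
  moreover have "infdist (q n) (Z m) \<le> suminf e" if "n \<ge> m" for n
  proof -
    have "q n \<in> Z (m + (n - m))" using q that by simp
    with ne near have "infdist (q n) (Z m) \<le> (\<Sum>k<n - m. e k)"
      by (rule infdist_le_sum_of_chain)
    also have "\<dots> \<le> suminf e"
      using \<open>summable e\<close> e_nonneg by (intro sum_le_suminf) auto
    finally show ?thesis .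
  qed
  ultimately show ?thesis
    by (intro LIMSEQ_le_const2[OF tendsto_infdist]) auto
qed

lemma limit_not_in_set_at_positive_distance:
  fixes Z :: "nat \<Rightarrow> 'a::metric_space set"
  assumes lim: "sets_converge_to Z p" and ne: "\<And>k. Z k \<noteq> {}" and pos: "0 < setdist A (Z m)"
    and near: "\<And>k x. x \<in> Z (Suc (m + k)) \<Longrightarrow> infdist x (Z (m + k)) < setdist A (Z m) / 3 ^ Suc k"
  shows "p \<notin> A"
proof
  assume "p \<in> A"
  define \<delta> where "\<delta> = setdist A (Z m)"
  have "(\<lambda>k. \<delta> / 3 * (1 / 3) ^ k) sums (\<delta> / 3 * (1 / (1 - 1 / 3)))"
    by (intro sums_mult geometric_sums) simp
  then have sums: "(\<lambda>k. \<delta> / 3 ^ Suc k) sums (\<delta> / 2)"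
    by (simp add: power_one_over)
  from lim ne near have "infdist p (Z m) \<le> (\<Sum>k. \<delta> / 3 ^ Suc k)"
    using sums_summable[OF sums] unfolding \<delta>_def by (rule infdist_limit_le_suminf)
  also have "\<dots> = \<delta> / 2" using sums by (rule sums_unique[symmetric])
  finally have "infdist p (Z m) \<le> \<delta> / 2" .
  moreover have "\<delta> \<le> infdist p (Z m)"
    using setdist_le_sing[OF \<open>p \<in> A\<close>] by (simp add: \<delta>_def infdist_eq_setdist)
  ultimately show False using pos \<delta>_def by simp
qed

lemma infdist_less_if_in_nbhd: "x \<in> nbhd Y e A \<Longrightarrow> infdist x A < e"
  by (simp add: nbhd_def)

lemma dseq_le_diameter: "dseq Ys Z n \<le> diameter (Z n)"
  unfolding dseq_def by simp

lemma dseq_le_setdist: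
  assumes "1 \<le> k" "k \<le> n"
  shows "dseq Ys Z n \<le> setdist (Ys k) (Z k) / 3 ^ (n + 1 - k)"
  unfolding dseq_def using assms by (intro min.coboundedI2 Min_le) auto

lemma regularizing_family_memberD:
  assumes "regularizing_family X Y F" "compact X" "X \<noteq> {}" "A \<in> F"
  shows "compact A" "A \<noteq> {}" "A \<subseteq> Y"
proof -
  have "A homeomorphic X" "A \<subseteq> Y"
    using assms(1,4) unfolding regularizing_family_def by auto
  then show "compact A" "A \<noteq> {}" "A \<subseteq> Y"
    using assms(2,3) homeomorphic_compactness homeomorphic_empty(1) by blast+
qed

lemma regularizing_family_setdist_pos:
  assumes "regularizing_family X Y F" "compact X" "X \<noteq> {}" "A \<in> F" "B \<in> F" "A \<noteq> B"
  shows "0 < setdist A B"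
proof -
  have "pairwise disjnt F" using assms(1) by (simp add: regularizing_family_def)
  then have "disjnt A B" using assms(4-6) by (simp add: pairwise_def)
  then show ?thesis
    using regularizing_family_memberD[OF assms(1-3)] assms(4,5)
    by (simp add: setdist_gt_0_compact_closed compact_imp_closed disjnt_def)
qed

theorem lemma2:
  fixes X :: "'b::metric_space set" and Y :: "'a::metric_space set"
    and F :: "'a set set" and Ys :: "nat \<Rightarrow> 'a set" and Z :: "nat \<Rightarrow> 'a set"
  assumes "compact X" and "X \<noteq> {}" and "compact Y"
    and "regularizing_family X Y F"
    and "bij_betw Ys {1..} F"
    and "\<And>n. Z n \<in> F" and "inj Z"
    and "Z 1 \<noteq> Ys 1" and "diameter (Z 1) < diameter (Z 0) / 2"
    and "Z 1 \<subseteq> nbhd Y (diameter (Z 0)) (Z 0)"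
    and "\<And>n. n \<ge> 1 \<Longrightarrow> Z (n + 1) \<noteq> Ys (n + 1)"
    and "\<And>n. n \<ge> 1 \<Longrightarrow> diameter (Z (n + 1)) < diameter (Z n) / 2"
    and "\<And>n. n \<ge> 1 \<Longrightarrow> Z (n + 1) \<subseteq> nbhd Y (dseq Ys Z n) (Z n)"
  shows "\<exists>p. sets_converge_to Z p \<and> p \<in> Y - \<Union>F"
proof -
  note member = regularizing_family_memberD[OF assms(4,1,2)]
  have ne: "Z n \<noteq> {}" and bdd: "bounded (Z n)" for n
    using member(1,2)[OF assms(6)] by (auto intro: compact_imp_bounded)
  have near_dseq: "infdist x (Z n) < dseq Ys Z n" if "n \<ge> 1" "x \<in> Z (Suc n)" for n x
    using assms(13) that by (auto dest!: subsetD intro: infdist_less_if_in_nbhd)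
  have near: "infdist x (Z n) < diameter (Z n)" if "x \<in> Z (Suc n)" for n x
    using assms(10) near_dseq[OF _ that] dseq_le_diameter[of Ys Z n] that
    by (cases n) (auto dest!: subsetD intro: infdist_less_if_in_nbhd)
  have "diameter (Z (Suc n)) \<le> 1 / 2 * diameter (Z n)" for n
    using assms(9) assms(12)[of n] by (cases n) auto
  then have "summable (\<lambda>n. diameter (Z n))"
    using diameter_ge_0[OF bdd] by (intro summable_ratio_test[of "1 / 2" 0]) auto
  with compact_imp_complete[OF assms(3)] ne member(3)[OF assms(6)] bdd near
  obtain p where "p \<in> Y" and lim: "sets_converge_to Z p"
    by (rule sets_converge_to_if_shrinking)
  have "p \<notin> Ys m" if "m \<ge> 1" for m
  proof (rule limit_not_in_set_at_positive_distance[OF lim ne])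
    have "Z m \<noteq> Ys m" using assms(8) assms(11)[of "m - 1"] \<open>m \<ge> 1\<close> by (cases "m = 1") auto
    moreover have "Ys m \<in> F" using assms(5) \<open>m \<ge> 1\<close> by (auto dest: bij_betw_apply)
    ultimately show "0 < setdist (Ys m) (Z m)"
      using regularizing_family_setdist_pos[OF assms(4,1,2) _ assms(6)] by metis
    show "infdist x (Z (m + k)) < setdist (Ys m) (Z m) / 3 ^ Suc k"
      if "x \<in> Z (Suc (m + k))" for k x
      using near_dseq[OF _ that] dseq_le_setdist[of m "m + k" Ys Z] \<open>m \<ge> 1\<close> by simp
  qed
  moreover have "\<Union>F = (\<Union>m\<in>{1..}. Ys m)" using assms(5) by (simp add: bij_betw_def)
  ultimately show ?thesis using \<open>p \<in> Y\<close> lim by auto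
qed

end
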